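(* Let $M\in\mathrm{Mat}(d,\mathbb{Z})$ with $D=\det(M)$, and let $r\in\mathbb{N}$. (a) Let $p\neq2$ be a prime. If $M$ is reversible mod $p^r$, then $D\equiv\pm1\pmod{p^r}$. If $d=2$, then $M$ is reversible mod $p^r$ if and only if $D\equiv1\pmod{p^r}$ or $M^2\equiv\mathbb{1}\pmod{p^r}$. (b) If $M$ is reversible mod $2^r$, then $D\equiv\pm1\pmod{2^{r-1}}$. If moreover $d=2$, $r\ge2$, $M$ is reversible mod $2^r$ and $D\equiv-1\pmod{2^{r-1}}$, then $M^2\equiv\mathbb{1}\pmod{2^{r-2}}$.
   Context: An integer matrix $M$ whose determinant is a unit mod $n$ is reversible mod $n$ if there exists $R\in\mathrm{GL}(d,\mathbb{Z}/n\mathbb{Z})$ with $RMR^{-1}\equiv M^{-1}\pmod n$, where $M^{-1}$ is the inverse of $M$ over $\mathbb{Z}/n\mathbb{Z}$. *)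

theory Defs
  imports "Jordan_Normal_Form.Determinant" "HOL-Number_Theory.Cong"
begin

definition mat_cong :: "int \<Rightarrow> int mat \<Rightarrow> int mat \<Rightarrow> bool" where
  "mat_cong n A B \<longleftrightarrow> dim_row A = dim_row B \<and> dim_col A = dim_col B \<and>
     (\<forall>i<dim_row A. \<forall>j<dim_col A. [A $$ (i,j) = B $$ (i,j)] (mod n))"

definition reversible_mod :: "int \<Rightarrow> int mat \<Rightarrow> bool" where
  "reversible_mod n M \<longleftrightarrow>
     (let d = dim_row M in
       M \<in> carrier_mat d d \<and> coprime (det M) n \<and>
       (\<exists>R Rinv Minv. R \<in> carrier_mat d d \<and> Rinv \<in> carrier_mat d d \<and> Minv \<in> carrier_mat d d \<and>
          mat_cong n (R * Rinv) (1\<^sub>m d) \<and> mat_cong n (Rinv * R) (1\<^sub>m d) \<and>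
          mat_cong n (M * Minv) (1\<^sub>m d) \<and> mat_cong n (Minv * M) (1\<^sub>m d) \<and>
          mat_cong n (R * M * Rinv) Minv))"

end

theory Submission
  imports Defs
begin

text \<open>Taking determinants in R M R^-1 \<equiv> M^-1 gives D^2 \<equiv> 1; modulo an odd prime power the only
  square roots of 1 are \<plusminus>1, and modulo 2^r they are \<plusminus>1 modulo 2^(r-1).
  For d = 2, taking traces and using D M^-1 \<equiv> adj M, whose trace is tr M, gives
  (D - 1) tr M \<equiv> 0. If D \<equiv> -1 this forces tr M \<equiv> 0 (modulo p^r, resp. 2^(r-1)), and
  Cayley-Hamilton, M^2 = tr M \<cdot> M - D, yields M^2 \<equiv> 1. Conversely, an involution is reversed
  by R = 1, and if D \<equiv> 1 then M^-1 \<equiv> adj M, into which M is conjugated by a trace-zero matrix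
  R = [[x, y], [z, -x]] with determinant -(x^2 + y z) prime to p.\<close>

lemma mat_cong_refl: "mat_cong n A A"
  by (simp add: mat_cong_def)

lemma mat_cong_dvd_modulus: "mat_cong n A B \<Longrightarrow> m dvd n \<Longrightarrow> mat_cong m A B"
  unfolding mat_cong_def by (metis cong_dvd_modulus)

lemma mat_cong_mult:
  assumes "A \<in> carrier_mat n k" "A' \<in> carrier_mat n k" "B \<in> carrier_mat k m" "B' \<in> carrier_mat k m"
    and "mat_cong q A A'" "mat_cong q B B'"
  shows "mat_cong q (A * B) (A' * B')"
  unfolding mat_cong_def
proof (intro conjI allI impI)
  fix i j assume "i < dim_row (A * B)" "j < dim_col (A * B)"
  with assms show "[(A * B) $$ (i, j) = (A' * B') $$ (i, j)] (mod q)"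
    unfolding mat_cong_def by (auto simp: scalar_prod_def intro!: cong_sum cong_mult)
qed (use assms in auto)

lemma mat_cong_smult_one: "[c = 1] (mod q) \<Longrightarrow> mat_cong q (c \<cdot>\<^sub>m 1\<^sub>m d) (1\<^sub>m d)"
  by (simp add: mat_cong_def)

lemma mat_cong_det:
  assumes A: "A \<in> carrier_mat n n" "B \<in> carrier_mat n n" and AB: "mat_cong q A B"
  shows "[det A = det B] (mod q)"
  unfolding det_def'[OF A(1)] det_def'[OF A(2)]
proof (intro cong_sum cong_mult cong_refl cong_prod)
  fix p i assume "p \<in> {p. p permutes {0..<n}}" "i \<in> {0..<n}"
  then have "p i < n" using permutes_in_image by fastforce
  with A AB \<open>i \<in> {0..<n}\<close> show "[A $$ (i, p i) = B $$ (i, p i)] (mod q)"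
    unfolding mat_cong_def by auto
qed

lemma mat_cong_one_imp_coprime_det:
  assumes "A \<in> carrier_mat n n" "B \<in> carrier_mat n n" "mat_cong q (A * B) (1\<^sub>m n)"
  shows "coprime (det A) q"
proof -
  have "[det (A * B) = det (1\<^sub>m n)] (mod q)"
    using assms by (intro mat_cong_det[of _ n]) auto
  then have "[det A * det B = 1] (mod q)"
    using assms by (simp add: det_mult)
  then show ?thesis
    unfolding coprime_iff_invertible_int by blast
qed

definition trace :: "'a :: comm_ring_1 mat \<Rightarrow> 'a" where
  "trace A = (\<Sum>i<dim_row A. A $$ (i, i))"

lemma trace_mult_comm:
  assumes "A \<in> carrier_mat n m" "B \<in> carrier_mat m n"
  shows "trace (A * B) = trace (B * A)"
proof -
  have "trace (A * B) = (\<Sum>i<n. \<Sum>l<m. A $$ (i, l) * B $$ (l, i))"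
    using assms by (simp add: trace_def scalar_prod_def atLeast0LessThan)
  also have "\<dots> = (\<Sum>l<m. \<Sum>i<n. B $$ (l, i) * A $$ (i, l))"
    by (subst sum.swap) (simp add: mult.commute)
  also have "\<dots> = trace (B * A)"
    using assms by (simp add: trace_def scalar_prod_def atLeast0LessThan)
  finally show ?thesis .
qed

lemma trace_smult: "A \<in> carrier_mat n n \<Longrightarrow> trace (c \<cdot>\<^sub>m A) = c * trace A"
  by (simp add: trace_def sum_distrib_left)

lemma mat_cong_trace:
  "A \<in> carrier_mat n n \<Longrightarrow> mat_cong q A B \<Longrightarrow> [trace A = trace B] (mod q)"
  unfolding mat_cong_def trace_def by (auto intro!: cong_sum)

lemma mat_cong_trace_conj:
  assumes "M \<in> carrier_mat n n" "R \<in> carrier_mat n n" "Rinv \<in> carrier_mat n n"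
    and "mat_cong q (Rinv * R) (1\<^sub>m n)"
  shows "[trace (R * M * Rinv) = trace M] (mod q)"
proof -
  have "trace (R * M * Rinv) = trace (Rinv * (R * M))"
    using assms by (intro trace_mult_comm[of _ n n]) auto
  also have "Rinv * (R * M) = Rinv * R * M"
    using assms by (simp add: assoc_mult_mat[of _ n n _ n _ n])
  also have "[trace \<dots> = trace (1\<^sub>m n * M)] (mod q)"
    using assms by (intro mat_cong_trace[of _ n] mat_cong_mult[OF _ _ _ _ _ mat_cong_refl]) auto
  finally show ?thesis
    using assms by simp
qed

lemma mat_cong_det_smult_inverse:
  assumes "M \<in> carrier_mat n n" "Minv \<in> carrier_mat n n" "mat_cong q (M * Minv) (1\<^sub>m n)"
  shows "mat_cong q (det M \<cdot>\<^sub>m Minv) (adj_mat M)"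
proof -
  have "adj_mat M * (M * Minv) = det M \<cdot>\<^sub>m Minv"
    using assms by (simp add: adj_mat assoc_mult_mat[symmetric, of _ n n _ n _ n]
        mult_smult_assoc_mat[of _ n n _ n])
  then have "det M \<cdot>\<^sub>m Minv = adj_mat M * (M * Minv)" ..
  also have "mat_cong q \<dots> (adj_mat M * 1\<^sub>m n)"
    using assms adj_mat(1)[OF assms(1)] by (intro mat_cong_mult[OF _ _ _ _ mat_cong_refl]) auto
  finally show ?thesis
    using adj_mat(1)[OF assms(1)] by simp
qed

lemma reversible_modI:
  assumes "M \<in> carrier_mat d d" "R \<in> carrier_mat d d" "Rinv \<in> carrier_mat d d"
    "Minv \<in> carrier_mat d d"
    and "mat_cong n (R * Rinv) (1\<^sub>m d)" "mat_cong n (Rinv * R) (1\<^sub>m d)"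
    and "mat_cong n (M * Minv) (1\<^sub>m d)" "mat_cong n (Minv * M) (1\<^sub>m d)"
    and "mat_cong n (R * M * Rinv) Minv"
  shows "reversible_mod n M"
proof -
  have "coprime (det M) n" "dim_row M = d"
    using assms mat_cong_one_imp_coprime_det[of M d Minv n] by auto
  with assms show ?thesis
    unfolding reversible_mod_def Let_def
    by (intro conjI exI[of _ R] exI[of _ Rinv] exI[of _ Minv]) simp_all
qed

lemma reversible_modE:
  assumes "reversible_mod n M" "M \<in> carrier_mat d d"
  obtains R Rinv Minv where
    "R \<in> carrier_mat d d" "Rinv \<in> carrier_mat d d" "Minv \<in> carrier_mat d d"
    "mat_cong n (R * Rinv) (1\<^sub>m d)" "mat_cong n (Rinv * R) (1\<^sub>m d)"
    "mat_cong n (M * Minv) (1\<^sub>m d)" "mat_cong n (R * M * Rinv) Minv"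
proof -
  have "dim_row M = d"
    using assms(2) by simp
  with assms(1) show thesis
    using that unfolding reversible_mod_def Let_def by blast
qed

lemma reversible_mod_det_square:
  assumes "reversible_mod n M" "M \<in> carrier_mat d d"
  shows "[det M * det M = 1] (mod n)"
proof -
  obtain R Rinv Minv where C: "R \<in> carrier_mat d d" "Rinv \<in> carrier_mat d d" "Minv \<in> carrier_mat d d"
    and RRinv: "mat_cong n (R * Rinv) (1\<^sub>m d)" and MMinv: "mat_cong n (M * Minv) (1\<^sub>m d)"
    and rev: "mat_cong n (R * M * Rinv) Minv"
    using assms by (elim reversible_modE)
  have R_unit: "[det R * det Rinv = 1] (mod n)"
    using mat_cong_det[of _ d, OF _ _ RRinv] C by (simp add: det_mult)
  have M_unit: "[det M * det Minv = 1] (mod n)"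
    using mat_cong_det[of _ d, OF _ _ MMinv] C assms(2) by (simp add: det_mult)
  have conj: "[det M * (det R * det Rinv) = det Minv] (mod n)"
    using mat_cong_det[of _ d, OF _ _ rev] C assms(2) by (simp add: det_mult ac_simps)
  have "[det M * 1 = det M * (det R * det Rinv)] (mod n)"
    using R_unit by (intro cong_mult cong_refl) (rule cong_sym)
  then have "[det M = det Minv] (mod n)"
    using conj by (simp add: cong_trans)
  then have "[det M * det M = det M * det Minv] (mod n)"
    by (intro cong_mult cong_refl)
  then show ?thesis
    using M_unit by (rule cong_trans)
qed

lemma prime_power_dvd_cancel_left:
  fixes p :: int
  assumes "prime p" "\<not> p dvd a" "p ^ r dvd a * b"
  shows "p ^ r dvd b"
  using assms by (simp add: prime_imp_coprime coprime_dvd_mult_right_iff)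

lemma cong_square_one_odd_prime_power:
  fixes p x :: int
  assumes p: "prime p" "p \<noteq> 2" and sq: "[x * x = 1] (mod p ^ r)"
  shows "[x = 1] (mod p ^ r) \<or> [x = -1] (mod p ^ r)"
proof -
  have dvd: "p ^ r dvd (x + 1) * (x - 1)"
    using sq by (simp add: cong_iff_dvd_diff algebra_simps)
  have "\<not> p dvd 2"
    using p primes_dvd_imp_eq[of p 2] by auto
  then have "\<not> p dvd x + 1 \<or> \<not> p dvd x - 1"
    using dvd_diff[of p "x + 1" "x - 1"] by auto
  then show ?thesis
  proof
    assume "\<not> p dvd x + 1"
    then have "p ^ r dvd x - 1"
      using prime_power_dvd_cancel_left[OF p(1) _ dvd] by blast
    then show ?thesis
      by (simp add: cong_iff_dvd_diff)
  next
    assume "\<not> p dvd x - 1"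
    moreover have "p ^ r dvd (x - 1) * (x + 1)"
      using dvd by (simp add: mult.commute)
    ultimately have "p ^ r dvd x + 1"
      using prime_power_dvd_cancel_left[OF p(1)] by blast
    then show ?thesis
      by (simp add: cong_iff_dvd_diff)
  qed
qed

lemma cong_square_one_two_power:
  fixes x :: int
  assumes sq: "[x * x = 1] (mod 2 ^ r)"
  shows "[x = 1] (mod 2 ^ (r - 1)) \<or> [x = -1] (mod 2 ^ (r - 1))"
proof (cases "r \<ge> 2")
  case False
  then have "r - 1 = 0"
    by simp
  then show ?thesis
    by simp
next
  case True
  define s where "s = r - 2"
  with True have r: "r = s + 2"
    by simp
  have dvd: "2 ^ r dvd x * x - 1"
    using sq by (simp add: cong_iff_dvd_diff)
  have "(2::int) dvd 2 ^ r"
    using r by simp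
  then have "2 dvd x * x - 1"
    using dvd by (rule dvd_trans)
  then have "odd x"
    by auto
  then obtain k where k: "x = 2 * k + 1"
    by (elim oddE)
  have "4 * 2 ^ s dvd 4 * (k * (k + 1))"
    using dvd r k by (simp add: power_add algebra_simps)
  then have "2 ^ s dvd k * (k + 1)"
    by (subst (asm) dvd_mult_cancel_left) simp
  moreover have "\<not> 2 dvd k + 1 \<or> \<not> 2 dvd k"
    by presburger
  ultimately have "2 ^ s dvd k \<or> 2 ^ s dvd k + 1"
    using prime_power_dvd_cancel_left[of 2 "k + 1" s k]
      prime_power_dvd_cancel_left[of 2 k s "k + 1"] by (auto simp: mult.commute)
  moreover have "x - 1 = 2 * k" "x + 1 = 2 * (k + 1)"
    using k by simp_all
  ultimately have "2 * 2 ^ s dvd x - 1 \<or> 2 * 2 ^ s dvd x + 1"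
    by (metis mult_dvd_mono dvd_refl)
  then show ?thesis
    using r by (simp add: cong_iff_dvd_diff)
qed

lemma cong_pred_mult_zero_odd_prime_power:
  fixes p D t :: int
  assumes p: "prime p" "p \<noteq> 2"
    and "[(D - 1) * t = 0] (mod p ^ r)" "[D = -1] (mod p ^ r)"
  shows "[t = 0] (mod p ^ r)"
proof -
  have "[(D - 1) * t = (-1 - 1) * t] (mod p ^ r)"
    using assms by (intro cong_mult cong_diff cong_refl)
  then have "[(-1 - 1) * t = 0] (mod p ^ r)"
    using assms(3) by (rule cong_trans[OF cong_sym])
  then have "p ^ r dvd 2 * t"
    by (simp add: cong_0_iff)
  moreover have "\<not> p dvd 2"
    using p primes_dvd_imp_eq[of p 2] by auto
  ultimately show ?thesis
    using prime_power_dvd_cancel_left[OF p(1), of 2 r t] by (simp add: cong_0_iff)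
qed

lemma cong_pred_mult_zero_two_power:
  fixes D t :: int
  assumes "r \<ge> 3" "[(D - 1) * t = 0] (mod 2 ^ r)" "[D = -1] (mod 2 ^ (r - 1))"
  shows "[t = 0] (mod 2 ^ (r - 1))"
proof -
  define s where "s = r - 3"
  with assms(1) have r: "r = s + 3"
    by simp
  from assms(3) obtain m where m: "D + 1 = 2 ^ (s + 2) * m"
    using r by (auto simp: cong_iff_dvd_diff elim!: dvdE)
  define u where "u = 2 ^ (s + 1) * m - 1"
  \<comment> \<open>since 4 divides D + 1, the number (D - 1) / 2 is odd\<close>
  have "D - 1 = 2 * u" "odd u"
    using m by (simp_all add: u_def algebra_simps)
  moreover have "(2::int) ^ r = 2 * 2 ^ (s + 2)"
    using r by (simp add: power_add)
  ultimately have "2 * 2 ^ (s + 2) dvd 2 * (u * t)"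
    using assms(2) unfolding cong_0_iff by (simp only: mult.assoc)
  then have "2 ^ (s + 2) dvd u * t"
    by (subst (asm) dvd_mult_cancel_left) simp
  then show ?thesis
    using prime_power_dvd_cancel_left[of 2 u "s + 2" t] \<open>odd u\<close> r by (simp add: cong_0_iff)
qed

text \<open>R = [[x, y], [z, -x]] satisfies R M = adj M R for M = [[a, b], [c, e]] exactly when
  x (a - e) + c y + b z = 0, and det R = -(x^2 + y z).\<close>
lemma exists_intertwiner_coefficients:
  fixes p a b c e :: int
  assumes p: "prime p"
  obtains x y z where "x * (a - e) + c * y + b * z = 0" "\<not> p dvd x * x + y * z"
proof (cases "gcd (a - e) (gcd b c) = 0")
  case True
  then have "a - e = 0" "b = 0" "c = 0"
    by auto
  with that[of 1 0 0] prime_gt_1_int[OF p] show thesis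
    by simp
next
  case False
  define g where "g = gcd (a - e) (gcd b c)"
  have "g dvd a - e" "g dvd b" "g dvd c"
    unfolding g_def by (meson dvd_trans gcd_dvd1 gcd_dvd2)+
  then obtain \<alpha> \<beta> \<gamma> where abc: "a - e = g * \<alpha>" "b = g * \<beta>" "c = g * \<gamma>"
    by (metis dvdE)
  have not_all: "\<not> (p dvd \<alpha> \<and> p dvd \<beta> \<and> p dvd \<gamma>)"
  proof
    assume "p dvd \<alpha> \<and> p dvd \<beta> \<and> p dvd \<gamma>"
    then have "g * p dvd a - e" "g * p dvd b" "g * p dvd c"
      using abc by auto
    then have "g * p dvd g * 1"
      unfolding g_def by (simp add: gcd_greatest)
    moreover have "g \<noteq> 0"
      using False by (simp add: g_def)
    ultimately show False
      using prime_gt_1_int[OF p] by simp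
  qed
  consider "\<not> p dvd \<gamma>" | "\<not> p dvd \<beta>" | "p dvd \<beta>" "p dvd \<gamma>" "\<not> p dvd \<alpha>"
    using not_all by blast
  then show thesis
  proof cases
    case 1
    then show thesis
      using that[of \<gamma> "- \<alpha>" 0] p abc by (auto simp: algebra_simps prime_dvd_mult_iff)
  next
    case 2
    then show thesis
      using that[of \<beta> 0 "- \<alpha>"] p abc by (auto simp: algebra_simps prime_dvd_mult_iff)
  next
    case 3
    have "p dvd (\<beta> - \<gamma>) * (\<beta> - \<gamma>)"
      using 3 by auto
    moreover have "\<not> p dvd \<alpha> * \<alpha>"
      using 3 p by (simp add: prime_dvd_mult_iff)
    ultimately have "\<not> p dvd (\<beta> - \<gamma>) * (\<beta> - \<gamma>) + \<alpha> * - \<alpha>"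
      by (metis add_diff_cancel_left' diff_minus_eq_add dvd_diff mult_minus_right)
    then show thesis
      using that[of "\<beta> - \<gamma>" \<alpha> "- \<alpha>"] abc by (simp add: algebra_simps)
  qed
qed

definition mat2 :: "'a \<Rightarrow> 'a \<Rightarrow> 'a \<Rightarrow> 'a \<Rightarrow> 'a mat" where
  "mat2 a b c e = mat 2 2 (\<lambda>(i, j). if i = 0 then (if j = 0 then a else b) else (if j = 0 then c else e))"

lemma mat2_carrier [simp]: "mat2 a b c e \<in> carrier_mat 2 2"
  by (simp add: mat2_def)

lemma dim_mat2 [simp]: "dim_row (mat2 a b c e) = 2" "dim_col (mat2 a b c e) = 2"
  by (simp_all add: mat2_def)

lemma index_mat2 [simp]:
  "mat2 a b c e $$ (0, 0) = a" "mat2 a b c e $$ (0, Suc 0) = b"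
  "mat2 a b c e $$ (Suc 0, 0) = c" "mat2 a b c e $$ (Suc 0, Suc 0) = e"
  by (simp_all add: mat2_def)

lemma mat2_cases:
  assumes "A \<in> carrier_mat 2 2"
  obtains a b c e where "A = mat2 a b c e"
proof
  show "A = mat2 (A $$ (0, 0)) (A $$ (0, 1)) (A $$ (1, 0)) (A $$ (1, 1))"
    by (rule eq_matI) (use assms in \<open>auto simp: numeral_2_eq_2 less_Suc_eq\<close>)
qed

lemma mat2_mult:
  "mat2 a b c e * mat2 a' b' c' e' =
     mat2 (a * a' + b * c') (a * b' + b * e') (c * a' + e * c') (c * b' + e * e')"
  for a b c e :: "'a :: comm_ring_1"
  by (rule eq_matI) (auto simp: scalar_prod_def numeral_2_eq_2 less_Suc_eq)

lemma cofactor_mat2: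
  "cofactor (mat2 a b c e) 0 0 = e" "cofactor (mat2 a b c e) 0 (Suc 0) = - c"
  "cofactor (mat2 a b c e) (Suc 0) 0 = - b" "cofactor (mat2 a b c e) (Suc 0) (Suc 0) = a"
  for a b c e :: "'a :: comm_ring_1"
  by (simp_all add: cofactor_def det_single mat_delete_def insert_index_def)

lemma det_mat2: "det (mat2 a b c e) = a * e - b * c"
  for a b c e :: "'a :: comm_ring_1"
  using laplace_expansion_column[OF mat2_carrier, of 0 a b c e]
  by (simp add: numeral_2_eq_2 cofactor_mat2)

lemma adj_mat_mat2: "adj_mat (mat2 a b c e) = mat2 e (- b) (- c) a"
  for a b c e :: "'a :: comm_ring_1"
  by (rule eq_matI) (auto simp: adj_mat_def cofactor_mat2 numeral_2_eq_2 less_Suc_eq)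

lemma trace_mat2: "trace (mat2 a b c e) = a + e"
  by (simp add: trace_def numeral_2_eq_2)

lemma trace_adj_mat2: "A \<in> carrier_mat 2 2 \<Longrightarrow> trace (adj_mat A) = trace A"
  by (elim mat2_cases) (simp add: adj_mat_mat2 trace_mat2)

lemma cayley_hamilton_mat2:
  "A \<in> carrier_mat 2 2 \<Longrightarrow> A * A = trace A \<cdot>\<^sub>m A - det A \<cdot>\<^sub>m 1\<^sub>m 2"
  for A :: "'a :: comm_ring_1 mat"
  by (elim mat2_cases)
    (rule eq_matI, auto simp: mat2_mult trace_mat2 det_mat2 algebra_simps numeral_2_eq_2 less_Suc_eq)

lemma mat_cong_square_one_mat2:
  assumes M: "M \<in> carrier_mat 2 2" and "[trace M = 0] (mod q)" "[det M = -1] (mod q)"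
  shows "mat_cong q (M * M) (1\<^sub>m 2)"
proof -
  have "[trace M * m = 0 * m] (mod q)" for m
    using assms by (intro cong_mult cong_refl)
  moreover have "[trace M * m - det M = 0 * m - (-1)] (mod q)" for m
    using assms by (intro cong_diff cong_mult cong_refl)
  ultimately show ?thesis
    using M unfolding cayley_hamilton_mat2[OF M] mat_cong_def by auto
qed

lemma reversible_mod_mat2_trace:
  assumes M: "M \<in> carrier_mat 2 2" and "reversible_mod n M"
  shows "[(det M - 1) * trace M = 0] (mod n)"
proof -
  obtain R Rinv Minv where C: "R \<in> carrier_mat 2 2" "Rinv \<in> carrier_mat 2 2" "Minv \<in> carrier_mat 2 2"
    and RinvR: "mat_cong n (Rinv * R) (1\<^sub>m 2)" and MMinv: "mat_cong n (M * Minv) (1\<^sub>m 2)"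
    and rev: "mat_cong n (R * M * Rinv) Minv"
    using assms by (elim reversible_modE)
  have "[trace M = trace (R * M * Rinv)] (mod n)"
    using mat_cong_trace_conj[OF M C(1,2) RinvR] by (rule cong_sym)
  also have "[trace (R * M * Rinv) = trace Minv] (mod n)"
    using C M by (intro mat_cong_trace[OF _ rev, of 2]) auto
  finally have "[det M * trace M = det M * trace Minv] (mod n)"
    by (intro cong_mult cong_refl)
  also have "det M * trace Minv = trace (det M \<cdot>\<^sub>m Minv)"
    using C by (simp add: trace_smult)
  also have "[\<dots> = trace (adj_mat M)] (mod n)"
    using mat_cong_det_smult_inverse[OF M C(3) MMinv] C by (intro mat_cong_trace[of _ 2]) auto
  also have "trace (adj_mat M) = trace M"
    using M by (rule trace_adj_mat2)
  finally show ?thesis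
    by (simp add: cong_iff_dvd_diff algebra_simps)
qed

lemma reversible_mod_of_square_cong_one:
  assumes "M \<in> carrier_mat d d" "mat_cong n (M * M) (1\<^sub>m d)"
  shows "reversible_mod n M"
  using assms by (intro reversible_modI[of M d "1\<^sub>m d" "1\<^sub>m d" M]) (auto simp: mat_cong_refl)

lemma trace_zero_mat2_intertwines_adj:
  fixes a b c e x y z :: "'a :: comm_ring_1"
  assumes "x * (a - e) + c * y + b * z = 0"
  shows "mat2 x y z (- x) * mat2 a b c e = adj_mat (mat2 a b c e) * mat2 x y z (- x)"
proof -
  have "x * a + y * c - (e * x + - b * z) = x * (a - e) + c * y + b * z"
    "z * b + - x * e - (- c * y + a * - x) = x * (a - e) + c * y + b * z"
    by (simp_all add: algebra_simps)
  then have "x * a + y * c = e * x + - b * z" "z * b + - x * e = - c * y + a * - x"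
    using assms by simp_all
  moreover have "x * b + y * e = e * y + - b * - x" "z * a + - x * c = - c * x + a * z"
    by (simp_all add: algebra_simps)
  ultimately show ?thesis
    by (simp only: adj_mat_mat2 mat2_mult)
qed

lemma reversible_mod_mat2_of_det_cong_one:
  fixes p :: int
  assumes M: "M \<in> carrier_mat 2 2" and p: "prime p" and D: "[det M = 1] (mod p ^ r)"
  shows "reversible_mod (p ^ r) M"
proof -
  obtain a b c e where Meq: "M = mat2 a b c e"
    using M by (elim mat2_cases)
  obtain x y z where eq: "x * (a - e) + c * y + b * z = 0" and unit: "\<not> p dvd x * x + y * z"
    using exists_intertwiner_coefficients[OF p] by metis
  define R where "R = mat2 x y z (- x)"
  have R: "R \<in> carrier_mat 2 2"
    by (simp add: R_def)
  have "coprime (- (x * x + y * z)) (p ^ r)"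
    unfolding coprime_minus_left_iff using unit p by (simp add: prime_imp_coprime coprime_commute)
  moreover have "det R = - (x * x + y * z)"
    by (simp add: R_def det_mat2)
  ultimately have "coprime (det R) (p ^ r)"
    by (simp only:)
  then obtain u where u: "[det R * u = 1] (mod p ^ r)"
    using cong_solve_coprime_int by blast
  define Rinv where "Rinv = u \<cdot>\<^sub>m adj_mat R"
  have Rinv: "Rinv \<in> carrier_mat 2 2"
    using adj_mat(1)[OF R] by (simp add: Rinv_def)
  have "u \<cdot>\<^sub>m (det R \<cdot>\<^sub>m 1\<^sub>m 2) = (det R * u) \<cdot>\<^sub>m 1\<^sub>m 2"
    by (rule eq_matI) auto
  then have RRinv: "mat_cong (p ^ r) (R * Rinv) (1\<^sub>m 2)" "mat_cong (p ^ r) (Rinv * R) (1\<^sub>m 2)"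
    using mat_cong_smult_one[OF u] adj_mat[OF R]
    by (simp_all add: Rinv_def mult_smult_distrib[OF R] mult_smult_assoc_mat[OF _ R])
  have "R * M = adj_mat M * R"
    using trace_zero_mat2_intertwines_adj[OF eq] by (simp add: Meq R_def)
  then have "R * M * Rinv = adj_mat M * (R * Rinv)"
    using R Rinv adj_mat(1)[OF M] by simp
  also have "mat_cong (p ^ r) \<dots> (adj_mat M * 1\<^sub>m 2)"
    using M R Rinv adj_mat(1)[OF M] by (intro mat_cong_mult[OF _ _ _ _ mat_cong_refl RRinv(1)]) auto
  finally have "mat_cong (p ^ r) (R * M * Rinv) (adj_mat M)"
    using adj_mat(1)[OF M] by simp
  then show ?thesis
    using M R Rinv RRinv adj_mat[OF M] mat_cong_smult_one[OF D]
    by (intro reversible_modI[of M 2 R Rinv "adj_mat M"]) auto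
qed

lemma reversible_mod_mat2_odd_prime_power_iff:
  fixes p :: int
  assumes M: "M \<in> carrier_mat 2 2" and p: "prime p" "p \<noteq> 2"
  shows "reversible_mod (p ^ r) M \<longleftrightarrow>
    [det M = 1] (mod p ^ r) \<or> mat_cong (p ^ r) (M * M) (1\<^sub>m 2)"
proof
  assume rev: "reversible_mod (p ^ r) M"
  have "[det M = 1] (mod p ^ r) \<or> [det M = -1] (mod p ^ r)"
    using cong_square_one_odd_prime_power[OF p reversible_mod_det_square[OF rev M]] .
  moreover have "mat_cong (p ^ r) (M * M) (1\<^sub>m 2)" if D: "[det M = -1] (mod p ^ r)"
    using cong_pred_mult_zero_odd_prime_power[OF p reversible_mod_mat2_trace[OF M rev] D]
    by (rule mat_cong_square_one_mat2[OF M _ D])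
  ultimately show "[det M = 1] (mod p ^ r) \<or> mat_cong (p ^ r) (M * M) (1\<^sub>m 2)"
    by blast
next
  assume "[det M = 1] (mod p ^ r) \<or> mat_cong (p ^ r) (M * M) (1\<^sub>m 2)"
  then show "reversible_mod (p ^ r) M"
    using reversible_mod_mat2_of_det_cong_one[OF M p(1)] reversible_mod_of_square_cong_one[OF M]
    by blast
qed

lemma reversible_mod_mat2_two_power_square:
  assumes M: "M \<in> carrier_mat 2 2" and "r \<ge> 3" "reversible_mod (2 ^ r) M"
    and D: "[det M = -1] (mod 2 ^ (r - 1))"
  shows "mat_cong (2 ^ (r - 1)) (M * M) (1\<^sub>m 2)"
  using cong_pred_mult_zero_two_power[OF \<open>r \<ge> 3\<close> reversible_mod_mat2_trace[OF M assms(3)] D]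
  by (rule mat_cong_square_one_mat2[OF M _ D])

theorem lemma4p11:
  fixes M :: "int mat" and d r :: nat
  assumes "M \<in> carrier_mat d d"
  shows "(\<forall>p::int. prime p \<and> p \<noteq> 2 \<longrightarrow>
            (reversible_mod (p ^ r) M \<longrightarrow>
               [det M = 1] (mod p ^ r) \<or> [det M = -1] (mod p ^ r)) \<and>
            (d = 2 \<longrightarrow>
               (reversible_mod (p ^ r) M \<longleftrightarrow>
                  [det M = 1] (mod p ^ r) \<or> mat_cong (p ^ r) (M * M) (1\<^sub>m 2))))
       \<and> (reversible_mod (2 ^ r) M \<longrightarrow>
            [det M = 1] (mod 2 ^ (r - 1)) \<or> [det M = -1] (mod 2 ^ (r - 1)))
       \<and> (d = 2 \<and> r \<ge> 2 \<and> reversible_mod (2 ^ r) M \<and> [det M = -1] (mod 2 ^ (r - 1)) \<longrightarrow>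
            mat_cong (2 ^ (r - 2)) (M * M) (1\<^sub>m 2))"
proof (intro conjI allI impI)
  fix p :: int
  assume "prime p \<and> p \<noteq> 2"
  then show "[det M = 1] (mod p ^ r) \<or> [det M = -1] (mod p ^ r)" if "reversible_mod (p ^ r) M"
    using cong_square_one_odd_prime_power reversible_mod_det_square[OF that assms] by blast
  show "reversible_mod (p ^ r) M \<longleftrightarrow>
      [det M = 1] (mod p ^ r) \<or> mat_cong (p ^ r) (M * M) (1\<^sub>m 2)" if "d = 2"
    using reversible_mod_mat2_odd_prime_power_iff assms that \<open>prime p \<and> p \<noteq> 2\<close> by blast
next
  assume "reversible_mod (2 ^ r) M"
  then show "[det M = 1] (mod 2 ^ (r - 1)) \<or> [det M = -1] (mod 2 ^ (r - 1))"
    using cong_square_one_two_power reversible_mod_det_square assms by blast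
next
  assume h: "d = 2 \<and> r \<ge> 2 \<and> reversible_mod (2 ^ r) M \<and> [det M = -1] (mod 2 ^ (r - 1))"
  show "mat_cong (2 ^ (r - 2)) (M * M) (1\<^sub>m 2)"
  proof (cases "r = 2")
    case True
    then show ?thesis
      using assms h by (simp add: mat_cong_def)
  next
    case False
    with h assms have "mat_cong (2 ^ (r - 1)) (M * M) (1\<^sub>m 2)"
      by (intro reversible_mod_mat2_two_power_square) auto
    then show ?thesis
      by (rule mat_cong_dvd_modulus) (simp add: le_imp_power_dvd)
  qed
qed

end
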